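(* Let $B$ be an $(n,k)$-blocker of a convex $n$-gon with vertices $0,\dots,n-1$ (indices mod $n$). If a vertex $i$ is incident to exactly one edge of $B$, namely $(i,j)$, then $B$ contains the ear-cover $(j-1,j+1)$.
   Context: An edge $(i,j)$ is the segment between vertices $i,j$; boundary edges are $(i,i+1)$, diagonals are the other edges. Two edges cross if they share an interior point. A triangulation is a maximal set of pairwise non-crossing diagonals. A blocker is a set $B$ of diagonals having a diagonal in common with every triangulation; it is saturated if for every $e\in B$, $B\setminus\{e\}$ is not a blocker. An $(n,k)$-blocker is a saturated blocker of size $k$. The diagonal $(j-1,j+1)$ is called an ear-cover (it covers $j$). *)

theory Defs
  imports Main
begin

text \<open>Convex n-gon with vertices 0..n-1 (in cyclic order). An edge is an
unordered pair {i,j} of distinct vertices.\<close>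

definition diagonal :: "nat \<Rightarrow> nat set \<Rightarrow> bool" where
  "diagonal n e \<longleftrightarrow> (\<exists>i j. e = {i, j} \<and> i < n \<and> j < n \<and> i \<noteq> j
      \<and> j \<noteq> (i + 1) mod n \<and> i \<noteq> (j + 1) mod n)"

text \<open>Two edges of a convex polygon share an interior point iff their
endpoints are distinct and interleave along the boundary.\<close>

definition crosses :: "nat set \<Rightarrow> nat set \<Rightarrow> bool" where
  "crosses e f \<longleftrightarrow> (\<exists>a b c d. ((e = {a, b} \<and> f = {c, d}) \<or> (e = {c, d} \<and> f = {a, b}))
      \<and> a < c \<and> c < b \<and> b < d)"

definition triangulation :: "nat \<Rightarrow> nat set set \<Rightarrow> bool" where
  "triangulation n T \<longleftrightarrow>
     (\<forall>e\<in>T. diagonal n e)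
   \<and> (\<forall>e\<in>T. \<forall>f\<in>T. \<not> crosses e f)
   \<and> (\<forall>e. diagonal n e \<and> e \<notin> T \<longrightarrow> (\<exists>f\<in>T. crosses e f))"

definition blocker :: "nat \<Rightarrow> nat set set \<Rightarrow> bool" where
  "blocker n B \<longleftrightarrow> (\<forall>e\<in>B. diagonal n e) \<and> (\<forall>T. triangulation n T \<longrightarrow> B \<inter> T \<noteq> {})"

definition saturated_blocker :: "nat \<Rightarrow> nat set set \<Rightarrow> bool" where
  "saturated_blocker n B \<longleftrightarrow> blocker n B \<and> (\<forall>e\<in>B. \<not> blocker n (B - {e}))"

definition nk_blocker :: "nat \<Rightarrow> nat \<Rightarrow> nat set set \<Rightarrow> bool" where
  "nk_blocker n k B \<longleftrightarrow> saturated_blocker n B \<and> card B = k"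

definition ear_cover :: "nat \<Rightarrow> nat \<Rightarrow> nat set" where
  "ear_cover n j = {(j + n - 1) mod n, (j + 1) mod n}"

end

theory Submission
  imports Defs
begin

(* In the fan of all diagonals at vertex i, the diagonal {i, j} is the common side of the
   triangles (i, j - 1, j) and (i, j, j + 1); flipping it gives the ear-cover (j - 1, j + 1),
   and the result is again a triangulation. The blocker B must meet it, but the only diagonal
   of B at i is {i, j}, which was flipped away, so B contains the ear-cover. *)

lemma crosses_commute: "crosses e f \<longleftrightarrow> crosses f e"
  unfolding crosses_def by blast

lemma crosses_ordered_iff:
  "a < b \<Longrightarrow> c < d \<Longrightarrow>
     crosses {a, b} {c, d} \<longleftrightarrow> a < c \<and> c < b \<and> b < d \<or> c < a \<and> a < d \<and> d < b"
  unfolding crosses_def doubleton_eq_iff by auto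

lemma crosses_iff_separates:
  assumes "a < b"
  shows "crosses {a, b} {c, d} \<longleftrightarrow>
           c \<notin> {a, b} \<and> d \<notin> {a, b} \<and> (a < c \<and> c < b \<longleftrightarrow> \<not> (a < d \<and> d < b))"
proof (cases c d rule: linorder_cases)
  case less
  then show ?thesis using crosses_ordered_iff[OF assms less] by auto
next
  case equal
  then show ?thesis unfolding crosses_def doubleton_eq_iff by auto
next
  case greater
  then show ?thesis using crosses_ordered_iff[OF assms greater] by (auto simp: insert_commute)
qed

lemma Suc_mod_eq_if: "x < n \<Longrightarrow> Suc x mod n = (if Suc x = n then 0 else Suc x)"
  by (simp add: mod_Suc)

lemma diagonal_doubleton_iff:
  "diagonal n {x, y} \<longleftrightarrow>
     x < n \<and> y < n \<and> x \<noteq> y \<and> x + 1 \<noteq> y \<and> y + 1 \<noteq> x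
     \<and> \<not> (x = 0 \<and> y = n - 1) \<and> \<not> (y = 0 \<and> x = n - 1)"
proof -
  have mod_form: "diagonal n {x, y} \<longleftrightarrow>
      x < n \<and> y < n \<and> x \<noteq> y \<and> y \<noteq> Suc x mod n \<and> x \<noteq> Suc y mod n"
    unfolding diagonal_def doubleton_eq_iff by auto
  show ?thesis
  proof (cases "x < n \<and> y < n")
    case True
    then show ?thesis unfolding mod_form by (simp add: Suc_mod_eq_if) linarith
  qed (auto simp: mod_form)
qed

lemma diagonal_ordered_iff:
  "x < y \<Longrightarrow> diagonal n {x, y} \<longleftrightarrow> y < n \<and> x + 1 < y \<and> \<not> (x = 0 \<and> y = n - 1)"
  by (auto simp: diagonal_doubleton_iff)

lemma diagonalE:
  assumes "diagonal n e"
  obtains x y where "e = {x, y}" "x < y" "y < n" "x + 1 < y" "\<not> (x = 0 \<and> y = n - 1)"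
proof -
  obtain x y where "e = {x, y}" "x < y" "diagonal n {x, y}"
    using assms unfolding diagonal_def by (metis insert_commute linorder_neqE_nat)
  with that show thesis by (simp add: diagonal_ordered_iff)
qed

lemma diagonal_imp_four_le: "diagonal n e \<Longrightarrow> 4 \<le> n"
  by (elim diagonalE) linarith

lemma ear_cover_first: "1 < n \<Longrightarrow> ear_cover n 0 = {1, n - 1}"
  unfolding ear_cover_def by (simp add: insert_commute)

lemma ear_cover_last:
  assumes "1 < n"
  shows "ear_cover n (n - 1) = {0, n - 2}"
proof -
  have "(n - 1 + n - 1) mod n = (n - 2 + n) mod n"
    by (rule arg_cong[where f = "\<lambda>x. x mod n"]) (use assms in simp)
  also have "\<dots> = n - 2" unfolding mod_add_self2 using assms by simp
  finally show ?thesis using assms unfolding ear_cover_def by (simp add: insert_commute)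
qed

lemma ear_cover_inner:
  assumes "0 < j" "j < n - 1"
  shows "ear_cover n j = {j - 1, j + 1}"
proof -
  have "(j + n - 1) mod n = (j - 1 + n) mod n"
    by (rule arg_cong[where f = "\<lambda>x. x mod n"]) (use assms in simp)
  also have "\<dots> = j - 1" unfolding mod_add_self2 using assms by simp
  finally show ?thesis using assms unfolding ear_cover_def by simp
qed

lemma ear_cover_cases:
  assumes "j < n" "3 \<le> n"
  obtains "j = 0" "ear_cover n j = {1, n - 1}"
    | "j = n - 1" "ear_cover n j = {0, n - 2}"
    | "0 < j" "j < n - 1" "ear_cover n j = {j - 1, j + 1}"
proof -
  consider "j = 0" | "j = n - 1" | "0 < j" "j < n - 1"
    using assms by linarith
  then show thesis
    using that assms ear_cover_first ear_cover_last ear_cover_inner by cases auto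
qed

lemma ear_cover_diagonal:
  assumes "j < n" "4 \<le> n"
  shows "diagonal n (ear_cover n j)"
proof -
  have "3 \<le> n" using assms(2) by simp
  with assms(1) show ?thesis
  proof (cases rule: ear_cover_cases)
    case 1
    with assms(2) show ?thesis unfolding 1(2) by (subst diagonal_ordered_iff) auto
  next
    case 2
    with assms(2) show ?thesis unfolding 2(2) by (subst diagonal_ordered_iff) auto
  next
    case 3
    with assms(2) show ?thesis unfolding 3(3) by (subst diagonal_ordered_iff) auto
  qed
qed

lemma not_crosses_ear_cover:
  assumes "j < n" "3 \<le> n" "i < n" "k < n" "i \<noteq> j" "k \<noteq> j"
  shows "\<not> crosses (ear_cover n j) {i, k}"
  using assms(1,2)
proof (cases rule: ear_cover_cases)
  case 1
  have "1 < n - 1" using assms(2) by simp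
  with 1 show ?thesis using assms by (simp add: crosses_iff_separates) linarith
next
  case 2
  have "0 < n - 2" using assms(2) by simp
  with 2 show ?thesis using assms by (simp add: crosses_iff_separates) linarith
next
  case 3
  have "j - 1 < j + 1" by simp
  with 3 show ?thesis using assms by (simp add: crosses_iff_separates) linarith
qed

lemma ear_cover_crosses_diagonal:
  assumes "diagonal n {i, j}"
  shows "crosses (ear_cover n j) {i, j}"
proof -
  have "3 \<le> n" using diagonal_imp_four_le[OF assms] by simp
  have "j < n" and i: "i < n" "i \<noteq> j" "i + 1 \<noteq> j" "j + 1 \<noteq> i"
    "\<not> (i = 0 \<and> j = n - 1)" "\<not> (j = 0 \<and> i = n - 1)"
    using assms by (simp_all add: diagonal_doubleton_iff)
  from \<open>j < n\<close> \<open>3 \<le> n\<close> show ?thesis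
  proof (cases rule: ear_cover_cases)
    case 1
    have "1 < n - 1" using \<open>3 \<le> n\<close> by simp
    with 1 i show ?thesis by (auto simp: crosses_iff_separates)
  next
    case 2
    have "0 < n - 2" using \<open>3 \<le> n\<close> by simp
    with 2 i show ?thesis by (auto simp: crosses_iff_separates)
  next
    case 3
    have "j - 1 < j + 1" by simp
    with 3 i show ?thesis by (auto simp: crosses_iff_separates)
  qed
qed

lemma separated_imp_diagonal:
  assumes "x < y" "y < n" "i < n" "k < n" "i \<notin> {x, y}" "k \<notin> {x, y}"
    and "x < i \<and> i < y \<longleftrightarrow> \<not> (x < k \<and> k < y)"
  shows "diagonal n {i, k}"
  using assms by (auto simp: diagonal_doubleton_iff)

lemma exists_vertex_inside:
  assumes "diagonal n {x, y}" "x < y" "{x, y} \<noteq> ear_cover n j"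
  shows "\<exists>k. x < k \<and> k < y \<and> k \<noteq> j"
proof -
  have "y < n" "x + 1 < y" using assms(1,2) by (simp_all add: diagonal_ordered_iff)
  show ?thesis
  proof (cases "j = x + 1")
    case False
    with \<open>x + 1 < y\<close> show ?thesis by (intro exI[of _ "x + 1"]) simp
  next
    case True
    have "y \<noteq> j + 1"
      using True \<open>y < n\<close> assms(3) ear_cover_inner[of j n] by auto
    with True \<open>x + 1 < y\<close> show ?thesis by (intro exI[of _ "y - 1"]) auto
  qed
qed

lemma exists_vertex_outside:
  assumes "diagonal n {x, y}" "x < y" "{x, y} \<noteq> ear_cover n j"
  shows "\<exists>k<n. (k < x \<or> y < k) \<and> k \<noteq> j"
proof -
  have "y < n" "\<not> (x = 0 \<and> y = n - 1)"
    using assms(1,2) by (simp_all add: diagonal_ordered_iff)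
  then consider "0 < x" "y < n - 1" | "x = 0" "y < n - 1" | "0 < x" "y = n - 1"
    by linarith
  then show ?thesis
  proof cases
    case 1
    show ?thesis
    proof (cases "x - 1 = j")
      case True
      with 1 assms(2) show ?thesis by (intro exI[of _ "y + 1"]) auto
    next
      case False
      with 1 \<open>y < n\<close> assms(2) show ?thesis by (intro exI[of _ "x - 1"]) auto
    qed
  next
    case 2
    have "\<not> (y + 1 = n - 1 \<and> j = n - 1)"
      using 2 assms(3) ear_cover_last[of n] by auto
    show ?thesis
    proof (cases "y + 1 = j")
      case True
      with 2 \<open>\<not> (y + 1 = n - 1 \<and> j = n - 1)\<close> show ?thesis by (intro exI[of _ "n - 1"]) auto
    next
      case False
      with 2 show ?thesis by (intro exI[of _ "y + 1"]) auto
    qed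
  next
    case 3
    have "\<not> (x = 1 \<and> j = 0)"
      using 3 assms(2,3) ear_cover_first[of n] by auto
    show ?thesis
    proof (cases "x - 1 = j")
      case True
      with 3 \<open>y < n\<close> \<open>\<not> (x = 1 \<and> j = 0)\<close> show ?thesis by (intro exI[of _ 0]) auto
    next
      case False
      with 3 \<open>y < n\<close> assms(2) show ?thesis by (intro exI[of _ "x - 1"]) auto
    qed
  qed
qed

lemma not_crosses_common_endpoint: "\<not> crosses {a, b} {a, c}"
  unfolding crosses_def doubleton_eq_iff by auto

lemma fan_diagonal_crossing:
  assumes "diagonal n {x, y}" "x < y" "i < n" "i \<notin> {x, y}" "{x, y} \<noteq> ear_cover n j"
  shows "\<exists>k. diagonal n {i, k} \<and> k \<noteq> j \<and> crosses {x, y} {i, k}"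
proof -
  have "y < n" using assms(1,2) by (simp add: diagonal_ordered_iff)
  obtain k where k: "k < n" "k \<notin> {x, y}" "k \<noteq> j" "x < i \<and> i < y \<longleftrightarrow> \<not> (x < k \<and> k < y)"
  proof (cases "x < i \<and> i < y")
    case True
    obtain k where "k < n" "k < x \<or> y < k" "k \<noteq> j"
      using exists_vertex_outside[OF assms(1,2,5)] by blast
    with True show ?thesis by (intro that[of k]) auto
  next
    case False
    obtain k where "x < k" "k < y" "k \<noteq> j"
      using exists_vertex_inside[OF assms(1,2,5)] by blast
    with False \<open>y < n\<close> show ?thesis by (intro that[of k]) auto
  qed
  have "diagonal n {i, k}"
    using separated_imp_diagonal[OF assms(2) \<open>y < n\<close> assms(3) k(1) assms(4) k(2,4)] .
  moreover have "crosses {x, y} {i, k}"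
    using assms(4) k(2,4) by (simp add: crosses_iff_separates[OF assms(2)])
  ultimately show ?thesis using k(3) by blast
qed

definition flipped_fan :: "nat \<Rightarrow> nat \<Rightarrow> nat \<Rightarrow> nat set set" where
  "flipped_fan n i j = insert (ear_cover n j) {{i, k} | k. diagonal n {i, k} \<and> k \<noteq> j}"

lemma flipped_fan_diagonals:
  assumes "diagonal n {i, j}" "e \<in> flipped_fan n i j"
  shows "diagonal n e"
proof -
  have "j < n" "4 \<le> n"
    using assms(1) diagonal_imp_four_le[OF assms(1)] by (simp_all add: diagonal_doubleton_iff)
  then show ?thesis using assms(2) ear_cover_diagonal unfolding flipped_fan_def by blast
qed

lemma flipped_fan_noncrossing:
  assumes "diagonal n {i, j}" "e \<in> flipped_fan n i j" "f \<in> flipped_fan n i j"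
  shows "\<not> crosses e f"
proof -
  have "j < n" "3 \<le> n" "i < n" "i \<noteq> j"
    using assms(1) diagonal_imp_four_le[OF assms(1)] by (simp_all add: diagonal_doubleton_iff)
  have fan_ear: "\<not> crosses (ear_cover n j) {i, k}" if "diagonal n {i, k}" "k \<noteq> j" for k
    using that \<open>j < n\<close> \<open>3 \<le> n\<close> \<open>i < n\<close> \<open>i \<noteq> j\<close>
    by (intro not_crosses_ear_cover) (simp_all add: diagonal_doubleton_iff)
  have ear_ear: "\<not> crosses (ear_cover n j) (ear_cover n j)"
    unfolding ear_cover_def by (rule not_crosses_common_endpoint)
  consider "e = ear_cover n j" | k where "e = {i, k}" "diagonal n {i, k}" "k \<noteq> j"
    using assms(2) unfolding flipped_fan_def by blast
  moreover consider "f = ear_cover n j" | l where "f = {i, l}" "diagonal n {i, l}" "l \<noteq> j"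
    using assms(3) unfolding flipped_fan_def by blast
  ultimately show ?thesis
    using ear_ear fan_ear not_crosses_common_endpoint crosses_commute by metis
qed

lemma flipped_fan_maximal:
  assumes "diagonal n {i, j}" "diagonal n e" "e \<notin> flipped_fan n i j"
  shows "\<exists>f\<in>flipped_fan n i j. crosses e f"
proof -
  obtain x y where e: "e = {x, y}" "x < y"
    using assms(2) by (elim diagonalE) blast
  show ?thesis
  proof (cases "i \<in> {x, y}")
    case True
    then obtain k where "e = {i, k}" using e(1) by blast
    with assms(2,3) have "e = {i, j}" unfolding flipped_fan_def by blast
    then have "crosses e (ear_cover n j)"
      using ear_cover_crosses_diagonal[OF assms(1)] crosses_commute by blast
    then show ?thesis unfolding flipped_fan_def by blast
  next
    case False
    have "i < n" using assms(1) by (simp add: diagonal_doubleton_iff)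
    moreover have "{x, y} \<noteq> ear_cover n j" using assms(3) e(1) unfolding flipped_fan_def by blast
    ultimately obtain k where "diagonal n {i, k}" "k \<noteq> j" "crosses {x, y} {i, k}"
      using fan_diagonal_crossing[OF assms(2)[unfolded e(1)] e(2)] False by blast
    then show ?thesis unfolding flipped_fan_def e(1) by blast
  qed
qed

lemma triangulation_flipped_fan:
  "diagonal n {i, j} \<Longrightarrow> triangulation n (flipped_fan n i j)"
  unfolding triangulation_def
  using flipped_fan_diagonals flipped_fan_noncrossing flipped_fan_maximal by blast

theorem mainTheorem10:
  fixes n k i j :: nat and B :: "nat set set"
  assumes "nk_blocker n k B"
    and "i < n" and "j < n"
    and "{e \<in> B. i \<in> e} = {{i, j}}"
  shows "ear_cover n j \<in> B"
proof -
  have blocker: "blocker n B"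
    using assms(1) by (simp add: nk_blocker_def saturated_blocker_def)
  have "{i, j} \<in> B" using assms(4) by blast
  with blocker have "diagonal n {i, j}" by (simp add: blocker_def)
  then have "B \<inter> flipped_fan n i j \<noteq> {}"
    using blocker triangulation_flipped_fan by (simp add: blocker_def)
  then obtain e where e: "e \<in> B" "e \<in> flipped_fan n i j" by blast
  show ?thesis
  proof (rule ccontr)
    assume "ear_cover n j \<notin> B"
    with e have "e \<in> {{i, k} | k. diagonal n {i, k} \<and> k \<noteq> j}"
      by (auto simp: flipped_fan_def)
    then obtain k where k: "e = {i, k}" "k \<noteq> j" by blast
    with e(1) have "e \<in> {e \<in> B. i \<in> e}" by simp
    with k(1) have "{i, k} = {i, j}" unfolding assms(4) by simp
    with k(2) show False by (simp add: doubleton_eq_iff)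
  qed
qed

end
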